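(* Let $p$ be an odd prime, $q=p^m$, $q=et+1$ with integers $e\geq 2,t\geq 1$, $R_{e,q}=\mathbb{F}_q[u]/\langle u^e-1\rangle$ with orthogonal idempotents $\mu_1,\dots,\mu_e$ (see context), and assume $\gcd(n,q)=1$. Let $\mathcal{C}=\bigoplus_{i=1}^e\mu_i\mathcal{C}_i$ be a cyclic code of length $n$ over $R_{e,q}$. Then $\mathcal{C}$ is an LCD code if and only if $\mathcal{C}_i$ is a reversible code of length $n$ over $\mathbb{F}_q$ for every $1\leq i\leq e$.
   Context: Write $u^e-1=\prod_{i=1}^e(u-\alpha_i)$ over $\mathbb{F}_q$, $G_i=u-\alpha_i$, $\widehat{G}_i=(u^e-1)/G_i$, $z_iG_i+h_i\widehat{G}_i=1$, $\mu_i=h_i\widehat{G}_i$; these are pairwise orthogonal idempotents summing to $1$. For a linear code $\mathcal{C}\subseteq R_{e,q}^n$, $\mathcal{C}_i=\{s_i\in\mathbb{F}_q^n:\exists\, s_j\ (j\neq i)\text{ with }\sum_{j}s_j\mu_j\in\mathcal{C}\}$ and $\mathcal{C}=\bigoplus_i\mu_i\mathcal{C}_i$. A code is LCD if $\mathcal{C}\cap\mathcal{C}^\perp=\{0\}$ (Euclidean dual). A cyclic code is reversible if $(c_0,\dots,c_{n-1})\in\mathcal{C}$ implies $(c_{n-1},\dots,c_1,c_0)\in\mathcal{C}$. *)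

theory Defs
  imports "HOL-Computational_Algebra.Polynomial"
begin

text \<open>The ring R_{e,q} = F_q[u]/(u^e - 1): elements are represented by their canonical
  representatives, polynomials of degree < e; multiplication is reduction mod u^e - 1.\<close>

definition ue1 :: "nat \<Rightarrow> 'a::field poly" where
  "ue1 e = monom 1 e - 1"

definition Rset :: "nat \<Rightarrow> 'a::field poly set" where
  "Rset e = {f. f mod ue1 e = f}"

definition rmult :: "nat \<Rightarrow> 'a::field poly \<Rightarrow> 'a poly \<Rightarrow> 'a poly" where
  "rmult e f g = (f * g) mod ue1 e"

definition Rvecs :: "nat \<Rightarrow> nat \<Rightarrow> 'a::field poly list set" where
  "Rvecs e n = {v. length v = n \<and> set v \<subseteq> Rset e}"

definition R_linear_code :: "nat \<Rightarrow> nat \<Rightarrow> 'a::field poly list set \<Rightarrow> bool" where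
  "R_linear_code e n C \<longleftrightarrow> C \<subseteq> Rvecs e n \<and> replicate n 0 \<in> C \<and>
     (\<forall>x\<in>C. \<forall>y\<in>C. map2 (+) x y \<in> C) \<and>
     (\<forall>r\<in>Rset e. \<forall>x\<in>C. map (rmult e r) x \<in> C)"

definition cshift :: "'b list \<Rightarrow> 'b list" where
  "cshift c = (if c = [] then [] else last c # butlast c)"

definition is_cyclic :: "'b list set \<Rightarrow> bool" where
  "is_cyclic C \<longleftrightarrow> (\<forall>c\<in>C. cshift c \<in> C)"

definition R_inner :: "nat \<Rightarrow> 'a::field poly list \<Rightarrow> 'a poly list \<Rightarrow> 'a poly" where
  "R_inner e x y = (\<Sum>j<length x. x ! j * y ! j) mod ue1 e"

definition R_dual :: "nat \<Rightarrow> nat \<Rightarrow> 'a::field poly list set \<Rightarrow> 'a poly list set" where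
  "R_dual e n C = {y \<in> Rvecs e n. \<forall>x\<in>C. R_inner e x y = 0}"

definition R_LCD :: "nat \<Rightarrow> nat \<Rightarrow> 'a::field poly list set \<Rightarrow> bool" where
  "R_LCD e n C \<longleftrightarrow> C \<inter> R_dual e n C = {replicate n 0}"

definition Gpol :: "(nat \<Rightarrow> 'a::field) \<Rightarrow> nat \<Rightarrow> 'a poly" where
  "Gpol \<alpha> i = [:- \<alpha> i, 1:]"

definition Ghat :: "nat \<Rightarrow> (nat \<Rightarrow> 'a::field) \<Rightarrow> nat \<Rightarrow> 'a poly" where
  "Ghat e \<alpha> i = ue1 e div Gpol \<alpha> i"

definition hpol :: "nat \<Rightarrow> (nat \<Rightarrow> 'a::field) \<Rightarrow> nat \<Rightarrow> 'a poly" where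
  "hpol e \<alpha> i = (SOME h. \<exists>z. z * Gpol \<alpha> i + h * Ghat e \<alpha> i = 1)"

definition mu :: "nat \<Rightarrow> (nat \<Rightarrow> 'a::field) \<Rightarrow> nat \<Rightarrow> 'a poly" where
  "mu e \<alpha> i = (hpol e \<alpha> i * Ghat e \<alpha> i) mod ue1 e"

text \<open>Component codes C_i = {s_i \<in> F_q^n. \<exists> s_j (j \<noteq> i). \<Sum>_j s_j mu_j \<in> C}.\<close>
definition comb :: "nat \<Rightarrow> (nat \<Rightarrow> 'a::field) \<Rightarrow> nat \<Rightarrow> (nat \<Rightarrow> 'a list) \<Rightarrow> 'a poly list" where
  "comb e \<alpha> n s = map (\<lambda>k. \<Sum>j\<in>{1..e}. smult (s j ! k) (mu e \<alpha> j)) [0..<n]"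

definition comp_code :: "nat \<Rightarrow> (nat \<Rightarrow> 'a::field) \<Rightarrow> nat \<Rightarrow> 'a poly list set \<Rightarrow> nat \<Rightarrow> 'a list set" where
  "comp_code e \<alpha> n C i = {v. length v = n \<and>
      (\<exists>s. s i = v \<and> (\<forall>j\<in>{1..e}. length (s j) = n) \<and> comb e \<alpha> n s \<in> C)}"

definition reversible :: "'b list set \<Rightarrow> bool" where
  "reversible D \<longleftrightarrow> (\<forall>c\<in>D. rev c \<in> D)"

end

theory Submission
  imports Defs "HOL-Number_Theory.Cong"
begin

text \<open>Evaluation at the \<open>e\<close> distinct roots of \<open>u\<^sup>e - 1\<close> splits \<open>R\<^sub>e\<^sub>,\<^sub>q\<close> into \<open>e\<close> copies
  of \<open>F\<^sub>q\<close>; the Euclidean inner product splits accordingly, so \<open>C\<close> is LCD iff every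
  component code \<open>C\<^sub>i\<close> is LCD. Each \<open>C\<^sub>i\<close> is a cyclic code over \<open>F\<^sub>q\<close>, i.e. an ideal of
  \<open>F\<^sub>q[u]/(u\<^sup>n - 1)\<close>, and Massey's criterion applies. As \<open>gcd(n, q) = 1\<close>, \<open>u\<^sup>n - 1\<close> is
  squarefree and the ideal has an idempotent generator \<open>\<epsilon>\<close>; a word \<open>w\<close> is in the dual iff
  \<open>f w(u\<^sup>-\<^sup>1) = 0\<close> for all \<open>f\<close> in the ideal. If the code is LCD this forces \<open>\<epsilon>(u\<^sup>-\<^sup>1) = \<epsilon>\<close>,
  whence the ideal is closed under \<open>u \<mapsto> u\<^sup>-\<^sup>1\<close>, i.e. reversible; conversely, in a reversible
  code every \<open>w \<in> C \<inter> C\<^sup>\<bottom>\<close> satisfies \<open>w(u\<^sup>-\<^sup>1) = \<epsilon> w(u\<^sup>-\<^sup>1) = 0\<close>.\<close>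

section \<open>Polynomials modulo \<open>u\<^sup>n - 1\<close>\<close>

lemma coeff_ue1:
  "coeff (ue1 n :: 'a::field poly) k = (if k = n then 1 else 0) - (if k = 0 then 1 else 0)"
  by (simp add: ue1_def coeff_monom)

lemma degree_ue1: "n \<ge> 1 \<Longrightarrow> degree (ue1 n :: 'a::field poly) = n"
  by (intro antisym degree_le le_degree) (auto simp: coeff_ue1)

lemma ue1_nonzero: "n \<ge> 1 \<Longrightarrow> (ue1 n :: 'a::field poly) \<noteq> 0"
  using degree_ue1[of n] by (metis degree_0 not_one_le_zero)

lemma cong_monom_ue1: "[monom 1 n = 1] (mod (ue1 n :: 'a::field poly))"
  by (simp add: ue1_def cong_iff_dvd_diff)

lemma Rset_mod_eq: "f \<in> Rset n \<Longrightarrow> f mod ue1 n = f"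
  by (simp add: Rset_def)

lemma mod_ue1_in_Rset [simp]: "f mod ue1 n \<in> Rset n"
  by (simp add: Rset_def)

lemma Rset_iff_degree:
  assumes n: "n \<ge> 1"
  shows "f \<in> Rset n \<longleftrightarrow> f = 0 \<or> degree f < n"
proof
  assume "f \<in> Rset n"
  then have "f mod ue1 n = f" by (rule Rset_mod_eq)
  then show "f = 0 \<or> degree f < n"
    using degree_mod_less[OF ue1_nonzero[OF n], of f] degree_ue1[OF n, where 'a='a] by simp
next
  assume "f = 0 \<or> degree f < n"
  then show "f \<in> Rset n"
    unfolding Rset_def using mod_poly_less[of f "ue1 n"] degree_ue1[OF n, where 'a='a] by auto
qed

lemma Rset_iff_coeff:
  assumes n: "n \<ge> 1"
  shows "f \<in> Rset n \<longleftrightarrow> (\<forall>k\<ge>n. coeff f k = 0)"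
proof -
  have "(f = 0 \<or> degree f < n) \<longleftrightarrow> (\<forall>k\<ge>n. coeff f k = 0)"
  proof
    assume "f = 0 \<or> degree f < n"
    then show "\<forall>k\<ge>n. coeff f k = 0" by (auto simp: coeff_eq_0)
  next
    assume "\<forall>k\<ge>n. coeff f k = 0"
    then have "degree f \<le> n - 1" using n by (intro degree_le) auto
    then show "f = 0 \<or> degree f < n" using n by linarith
  qed
  then show ?thesis by (simp add: Rset_iff_degree[OF n])
qed

lemma Rset_zero [simp]: "0 \<in> Rset n"
  by (simp add: Rset_def)

lemma Rset_add: "f \<in> Rset n \<Longrightarrow> g \<in> Rset n \<Longrightarrow> f + g \<in> Rset n"
  and Rset_diff: "f \<in> Rset n \<Longrightarrow> g \<in> Rset n \<Longrightarrow> f - g \<in> Rset n"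
  and Rset_smult: "f \<in> Rset n \<Longrightarrow> smult c f \<in> Rset n"
  by (simp_all add: Rset_def poly_mod_add_left poly_mod_diff_left mod_smult_left)

lemma Rset_sum: "(\<And>x. x \<in> A \<Longrightarrow> f x \<in> Rset n) \<Longrightarrow> sum f A \<in> Rset n"
  by (induction A rule: infinite_finite_induct) (auto simp: Rset_add)

lemma Rset_const: "n \<ge> 1 \<Longrightarrow> [:c:] \<in> Rset n"
  by (simp add: Rset_iff_degree)

lemma Rset_cong_eq:
  "f \<in> Rset n \<Longrightarrow> g \<in> Rset n \<Longrightarrow> [f = g] (mod ue1 n) \<Longrightarrow> f = g"
  by (simp add: Rset_def cong_def)

lemma cong_monom_mod_ue1: "[monom c k = monom c (k mod n)] (mod (ue1 n :: 'a::field poly))"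
proof -
  have "monom c k = monom c (k mod n) * monom 1 n ^ (k div n)"
    by (simp add: monom_power mult_monom)
  also have "[\<dots> = monom c (k mod n) * 1 ^ (k div n)] (mod ue1 n)"
    by (rule cong_scalar_left, rule cong_pow, rule cong_monom_ue1)
  finally show ?thesis by simp
qed

lemma cong_monom_ue1_mod_eq:
  "k mod n = l mod n \<Longrightarrow> [monom c k = monom c l] (mod (ue1 n :: 'a::field poly))"
  by (metis cong_monom_mod_ue1 cong_sym cong_trans)

lemma pcompose_monom: "pcompose (monom c k) q = smult c (q ^ k)"
proof -
  have "pcompose ([:0, 1:] ^ k) q = q ^ k" for k
    by (induction k) (simp_all add: pcompose_mult pcompose_pCons pcompose_1)
  then show ?thesis by (simp add: monom_altdef pcompose_smult)
qed

lemma cong_pcompose: "[q = q'] (mod m) \<Longrightarrow> [pcompose f q = pcompose f q'] (mod m)"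
  for m :: "'a::field poly"
  by (induction f) (auto simp: pcompose_pCons intro!: cong_add cong_mult)

text \<open>Modulo \<open>u\<^sup>n - 1\<close> the monomial \<open>u\<^sup>n\<^sup>-\<^sup>1\<close> is the inverse of \<open>u\<close>,
  so \<open>recip n f\<close> represents \<open>f(u\<^sup>-\<^sup>1)\<close>.\<close>

definition recip :: "nat \<Rightarrow> 'a::comm_ring_1 poly \<Rightarrow> 'a poly" where
  "recip n f = pcompose f (monom 1 (n - 1))"

lemma recip_mult: "recip n (f * g) = recip n f * recip n g"
  and recip_diff: "recip n (f - g) = recip n f - recip n g"
  and recip_0 [simp]: "recip n 0 = 0"
  and recip_1 [simp]: "recip n 1 = 1"
  by (simp_all add: recip_def pcompose_mult pcompose_diff pcompose_1)

lemma recip_monom: "recip n (monom c k) = monom c ((n - 1) * k)"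
  by (simp add: recip_def pcompose_monom monom_power smult_monom)

lemma cong_recip:
  assumes "[f = g] (mod ue1 n)"
  shows "[recip n f = recip n g] (mod (ue1 n :: 'a::field poly))"
proof -
  have "recip n (ue1 n) = monom 1 ((n - 1) * n) - (1 :: 'a poly)"
    by (simp add: ue1_def recip_diff recip_monom flip: monom_0)
  also have "[\<dots> = monom 1 0 - 1] (mod ue1 n)"
    by (intro cong_diff cong_monom_ue1_mod_eq cong_refl) simp
  also have "monom 1 0 - 1 = (0 :: 'a poly)"
    by (simp add: monom_0 pCons_one)
  finally have "(ue1 n :: 'a poly) dvd recip n (ue1 n)" by (simp add: cong_0_iff)
  moreover obtain k where "f - g = ue1 n * k"
    using assms by (auto simp: cong_iff_dvd_diff)
  then have "recip n f - recip n g = recip n (ue1 n) * recip n k"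
    by (metis recip_diff recip_mult)
  ultimately show ?thesis by (simp add: cong_iff_dvd_diff)
qed

lemma cong_recip_recip:
  assumes "n \<ge> 1"
  shows "[recip n (recip n f) = f] (mod (ue1 n :: 'a::field poly))"
proof -
  obtain m where n: "n = Suc m" using assms by (cases n) auto
  have "(n - 1) * (n - 1) mod n = 1 mod n"
  proof (cases m)
    case (Suc l)
    then have "(n - 1) * (n - 1) = 1 + n * l" by (simp add: n algebra_simps)
    then show ?thesis by (metis mod_mult_self2)
  qed (simp add: n)
  then have "[monom 1 ((n - 1) * (n - 1)) = (monom 1 1 :: 'a poly)] (mod ue1 n)"
    by (rule cong_monom_ue1_mod_eq)
  then have "[pcompose f (monom 1 ((n - 1) * (n - 1))) = pcompose f (monom 1 1)] (mod ue1 n)"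
    by (rule cong_pcompose)
  moreover have "recip n (recip n f) = pcompose f (monom 1 ((n - 1) * (n - 1)))"
    by (simp add: recip_def pcompose_monom monom_power flip: pcompose_assoc)
  moreover have "monom 1 1 = ([:0, 1:] :: 'a poly)"
    by (simp add: monom_Suc monom_0)
  ultimately show ?thesis by simp
qed

lemma Poly_in_Rset: "n \<ge> 1 \<Longrightarrow> length v \<le> n \<Longrightarrow> Poly v \<in> Rset n"
  by (simp add: Rset_iff_coeff nth_default_beyond)

lemma Poly_eq_imp_eq: "length v = length w \<Longrightarrow> Poly v = Poly w \<Longrightarrow> v = w"
  by (rule nth_equalityI) (metis coeff_Poly_eq nth_default_nth)+

lemma Poly_map2_plus: "length v = length w \<Longrightarrow> Poly (map2 (+) v w) = Poly v + Poly w"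
proof (induction v arbitrary: w)
  case (Cons a v)
  then show ?case by (cases w) auto
qed simp

lemma Poly_map_coeff_Rset: "n \<ge> 1 \<Longrightarrow> f \<in> Rset n \<Longrightarrow> Poly (map (coeff f) [0..<n]) = f"
  by (simp add: poly_eq_iff Rset_iff_coeff nth_default_def)

lemma Poly_eq_sum_monom: "Poly w = (\<Sum>k<length w. monom (w ! k) k)"
  by (simp add: poly_eq_iff coeff_sum coeff_monom nth_default_def)

lemma Poly_cshift:
  assumes "v \<noteq> []"
  shows "Poly (cshift v) = pCons 0 (Poly v) mod ue1 (length v)"
proof -
  obtain b c where v: "v = b @ [c]" using assms by (cases v rule: rev_cases) auto
  have "pCons 0 (Poly v) = Poly (cshift v) + ue1 (length v) * [:c:]"
    by (simp add: v cshift_def Poly_append ue1_def monom_Suc algebra_simps smult_monom)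
  moreover have "Poly (cshift v) \<in> Rset (length v)"
    using assms by (intro Poly_in_Rset) (simp_all add: cshift_def Suc_le_eq)
  ultimately show ?thesis by (simp add: poly_mod_add_left mod_smult_left Rset_mod_eq)
qed

lemma cong_Poly_rev:
  assumes "length w = n"
  shows "[Poly (rev w) = monom 1 (n - 1) * recip n (Poly w)] (mod (ue1 n :: 'a::field poly))"
proof -
  have "(\<Sum>k<n. monom (w ! k) (n - Suc k)) = (\<Sum>k<n. monom (w ! (n - Suc k)) (n - Suc (n - Suc k)))"
    by (rule sum.nat_diff_reindex[symmetric])
  also have "\<dots> = Poly (rev w)"
    using assms by (auto simp: Poly_eq_sum_monom rev_nth intro!: sum.cong)
  finally have "Poly (rev w) = (\<Sum>k<n. monom (w ! k) (n - Suc k))" ..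
  also have "[\<dots> = (\<Sum>k<n. monom (w ! k) ((n - 1) + (n - 1) * k))] (mod ue1 n)"
  proof (rule cong_sum, rule cong_monom_ue1_mod_eq)
    fix k assume "k \<in> {..<n}"
    then have "(n - 1) + (n - 1) * k = (n - Suc k) + n * k"
      by (cases n) (auto simp: algebra_simps)
    then show "(n - Suc k) mod n = ((n - 1) + (n - 1) * k) mod n" by simp
  qed
  also have "(\<Sum>k<n. monom (w ! k) ((n - 1) + (n - 1) * k)) = monom 1 (n - 1) * recip n (Poly w)"
    using assms
    by (simp add: Poly_eq_sum_monom recip_def pcompose_sum pcompose_monom monom_power
        smult_monom sum_distrib_left mult_monom)
  finally show ?thesis .
qed

lemma cong_recip_Poly:
  assumes "n \<ge> 1" and "length w = n"
  shows "[recip n (Poly w) = monom 1 1 * Poly (rev w)] (mod (ue1 n :: 'a::field poly))"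
proof -
  have "[monom 1 1 * Poly (rev w) = monom 1 1 * (monom 1 (n - 1) * recip n (Poly w))] (mod ue1 n)"
    using cong_Poly_rev[OF assms(2)] by (rule cong_scalar_left)
  also have "monom 1 1 * (monom 1 (n - 1) * recip n (Poly w)) = monom 1 n * recip n (Poly w)"
    using assms(1) by (simp add: mult_monom flip: mult.assoc)
  also have "[\<dots> = 1 * recip n (Poly w)] (mod ue1 n)"
    using cong_monom_ue1 by (rule cong_scalar_right)
  finally show ?thesis by (simp add: cong_sym)
qed

lemma cong_mult_monom_ue1_0_iff:
  assumes "n \<ge> 1"
  shows "[monom 1 (n - 1) * a = 0] (mod ue1 n) \<longleftrightarrow> [a = 0] (mod (ue1 n :: 'a::field poly))"
proof
  assume a: "[monom 1 (n - 1) * a = 0] (mod ue1 n)"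
  have "[a = monom 1 n * a] (mod ue1 n)"
    using cong_scalar_right[OF cong_monom_ue1[of n], of a] by (simp add: cong_sym)
  also have "monom 1 n * a = monom 1 1 * (monom 1 (n - 1) * a)"
    using assms by (simp add: mult_monom flip: mult.assoc)
  also have "[\<dots> = monom 1 1 * 0] (mod ue1 n)"
    using a by (rule cong_scalar_left)
  finally show "[a = 0] (mod ue1 n)" by simp
next
  assume "[a = 0] (mod ue1 n)"
  then show "[monom 1 (n - 1) * a = 0] (mod ue1 n)"
    using cong_scalar_left[of a 0 "ue1 n" "monom 1 (n - 1)"] by simp
qed

lemma pCons_0_mod: "pCons 0 f mod m = pCons 0 (f mod m) mod (m :: 'a::field poly)"
proof -
  have "pCons 0 g = [:0, 1:] * g" for g :: "'a poly"
    by simp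
  then show ?thesis by (metis mod_mult_right_eq)
qed

lemma coeff_pCons_0_mod_ue1:
  assumes "Suc k < n"
  shows "coeff (pCons 0 h mod ue1 n) (Suc k) = coeff (h mod ue1 n) k"
proof -
  define v where "v = map (coeff (h mod ue1 n)) [0..<n]"
  have n: "n \<ge> 1" using assms by simp
  have v: "Poly v = h mod ue1 n" "length v = n"
    unfolding v_def using Poly_map_coeff_Rset[OF n mod_ue1_in_Rset] by simp_all
  have "pCons 0 h mod ue1 n = pCons 0 (Poly v) mod ue1 n"
    by (metis v(1) pCons_0_mod)
  also have "\<dots> = Poly (cshift v)"
    using Poly_cshift[of v] v n by (cases v) auto
  finally show ?thesis
    using assms by (simp add: v_def cshift_def nth_default_def nth_butlast)
qed

lemma coeff_mod_ue1_monom_mult: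
  "k + d < n \<Longrightarrow> coeff ((monom 1 d * h) mod ue1 n) (k + d) = coeff (h mod ue1 n) k"
proof (induction d)
  case (Suc d)
  have "monom 1 (Suc d) * h = pCons 0 (monom 1 d * h)"
    by (simp add: monom_Suc)
  then show ?case
    using Suc coeff_pCons_0_mod_ue1[of "k + d" n "monom 1 d * h"] by simp
qed simp

lemma coeff_mod_ue1_top:
  assumes n: "n \<ge> 1" and h: "degree h \<le> 2 * n - 2"
  shows "coeff (h mod ue1 n) (n - 1) = coeff h (n - 1)"
proof -
  let ?q = "h div ue1 n"
  have "coeff (?q * ue1 n) (n - 1) = 0"
  proof (cases "?q = 0")
    case False
    have "degree (h mod ue1 n) \<le> 2 * n - 2"
      using Rset_iff_degree[OF n, of "h mod ue1 n"] by auto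
    then have "degree (?q * ue1 n) \<le> 2 * n - 2"
      using h degree_diff_le_max[of h "h mod ue1 n"] by (simp add: minus_mod_eq_div_mult)
    moreover have "degree (?q * ue1 n) = degree ?q + n"
      using False ue1_nonzero[OF n, where 'a='a] degree_ue1[OF n, where 'a='a]
      by (simp add: degree_mult_eq)
    ultimately have "degree ?q < n - 1"
      using n by linarith
    moreover have "?q * ue1 n = monom 1 n * ?q - ?q"
      by (simp add: ue1_def algebra_simps)
    ultimately show ?thesis
      by (simp add: coeff_monom_mult coeff_eq_0)
  qed simp
  moreover have "coeff h (n - 1) = coeff (?q * ue1 n) (n - 1) + coeff (h mod ue1 n) (n - 1)"
    by (metis coeff_add div_mult_mod_eq)
  ultimately show ?thesis by simp
qed

definition inner_list :: "'a::comm_semiring_0 list \<Rightarrow> 'a list \<Rightarrow> 'a" where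
  "inner_list v w = (\<Sum>k<length v. v ! k * w ! k)"

lemma inner_list_eq_coeff_mod_ue1:
  assumes n: "n \<ge> 1" and v: "length v = n" and w: "length w = n"
  shows "inner_list v w = coeff ((Poly v * Poly (rev w)) mod ue1 n) (n - 1)"
proof -
  have "{..n - 1} = {..<n}" using n by auto
  then have "coeff (Poly v * Poly (rev w)) (n - 1)
      = (\<Sum>i<n. nth_default 0 v i * nth_default 0 (rev w) (n - 1 - i))"
    by (simp add: coeff_mult)
  also have "\<dots> = inner_list v w"
    unfolding inner_list_def v
  proof (rule sum.cong)
    fix i assume "i \<in> {..<n}"
    then show "nth_default 0 v i * nth_default 0 (rev w) (n - 1 - i) = v ! i * w ! i"
      using v w by (simp add: nth_default_def rev_nth)
  qed simp
  finally have "inner_list v w = coeff (Poly v * Poly (rev w)) (n - 1)" ..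
  moreover have deg: "degree (Poly xs) \<le> n - 1" if "length xs = n" for xs :: "'a list"
    using Poly_in_Rset[OF n, of xs] Rset_iff_degree[OF n, of "Poly xs"] that by auto
  have "degree (Poly v * Poly (rev w)) \<le> 2 * n - 2"
    using deg[OF v] deg[of "rev w"] w degree_mult_le[of "Poly v" "Poly (rev w)"] by simp
  ultimately show ?thesis
    using coeff_mod_ue1_top[OF n \<open>degree (Poly v * Poly (rev w)) \<le> 2 * n - 2\<close>] by simp
qed

lemma pderiv_ue1: "pderiv (ue1 n :: 'a::field poly) = monom (of_nat n) (n - 1)"
  by (simp add: ue1_def pderiv_monom pderiv_diff)

lemma is_unit_if_dvd_ue1_pderiv:
  assumes n: "of_nat n \<noteq> (0 :: 'a::field)"
    and "k dvd ue1 n" and "k dvd pderiv (ue1 n :: 'a poly)"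
  shows "is_unit k"
proof -
  have "n \<ge> 1" using n by (cases n) auto
  then have "[:0, 1:] * pderiv (ue1 n :: 'a poly) = monom (of_nat n) n"
    by (cases n) (simp_all add: pderiv_ue1 monom_Suc)
  moreover have "smult (of_nat n) (ue1 n :: 'a poly) = monom (of_nat n) n - [:of_nat n:]"
    by (simp add: ue1_def smult_diff_right smult_monom)
  ultimately have "[:of_nat n:] = [:0, 1:] * pderiv (ue1 n) - smult (of_nat n) (ue1 n :: 'a poly)"
    by simp
  moreover have "k dvd [:0, 1:] * pderiv (ue1 n) - smult (of_nat n) (ue1 n)"
    using assms(2,3) by (intro dvd_diff dvd_mult dvd_smult)
  ultimately have "k dvd [:of_nat n:]"
    by simp
  moreover have "is_unit [:of_nat n :: 'a:]"
    using n by (simp add: is_unit_const_poly_iff dvd_field_iff)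
  ultimately show ?thesis
    by (rule dvd_unit_imp_unit)
qed

lemma coprime_if_mult_eq_ue1:
  assumes "of_nat n \<noteq> (0 :: 'a::field)" and "g * h = (ue1 n :: 'a poly)"
  shows "coprime g h"
proof (rule coprimeI)
  fix k assume "k dvd g" "k dvd h"
  then have "k dvd g * h" "k dvd g * pderiv h + h * pderiv g"
    by simp_all
  then have "k dvd ue1 n" "k dvd pderiv (ue1 n)"
    unfolding assms(2)[symmetric] pderiv_mult .
  then show "is_unit k"
    by (rule is_unit_if_dvd_ue1_pderiv[OF assms(1)])
qed

lemma poly_bezout:
  fixes g h :: "'a::field poly"
  assumes "coprime g h"
  shows "\<exists>a b. a * g + b * h = 1"
proof -
  define S where "S = {a * g + b * h | a b. True}"
  have gS: "g \<in> S"
    unfolding S_def by (rule CollectI, rule exI[of _ 1], rule exI[of _ 0]) simp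
  have hS: "h \<in> S"
    unfolding S_def by (rule CollectI, rule exI[of _ 0], rule exI[of _ 1]) simp
  have "g \<noteq> 0 \<or> h \<noteq> 0"
    using assms by auto
  then obtain x where "x \<in> S" "x \<noteq> 0"
    using gS hS by blast
  then obtain m where mS: "m \<in> S" and m0: "m \<noteq> 0"
    and m_min: "\<And>y. y \<in> S \<Longrightarrow> y \<noteq> 0 \<Longrightarrow> degree m \<le> degree y"
    using ex_has_least_nat[of "\<lambda>y. y \<in> S \<and> y \<noteq> 0" x degree] by blast
  obtain a0 b0 where m: "m = a0 * g + b0 * h"
    using mS unfolding S_def by blast
  have m_dvd: "m dvd y" if yS: "y \<in> S" for y
  proof -
    obtain a1 b1 where y: "y = a1 * g + b1 * h"
      using yS unfolding S_def by blast
    have "y mod m = (a1 - (y div m) * a0) * g + (b1 - (y div m) * b0) * h"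
      using div_mult_mod_eq[of y m] unfolding m y by (simp add: algebra_simps)
    then have "y mod m \<in> S"
      unfolding S_def by blast
    then have "y mod m = 0"
      using m_min[of "y mod m"] degree_mod_less'[OF m0, of y] by linarith
    then show ?thesis by (simp add: mod_eq_0_iff_dvd)
  qed
  have "is_unit m"
    using assms m_dvd[OF gS] m_dvd[OF hS] by (rule coprime_common_divisor)
  then obtain m' where "1 = m * m'"
    by (rule dvdE)
  moreover have "(m' * a0) * g + (m' * b0) * h = m * m'"
    unfolding m by (simp add: algebra_simps)
  ultimately show ?thesis by metis
qed

section \<open>Cyclic codes over a field: LCD iff reversible\<close>

definition dual_code :: "nat \<Rightarrow> 'a::comm_semiring_0 list set \<Rightarrow> 'a list set" where
  "dual_code n D = {w. length w = n \<and> (\<forall>v\<in>D. inner_list v w = 0)}"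

lemma replicate_0_in_dual_code: "(\<And>v. v \<in> D \<Longrightarrow> length v = n) \<Longrightarrow> replicate n 0 \<in> dual_code n D"
  by (simp add: dual_code_def inner_list_def)

definition LCD_code :: "nat \<Rightarrow> 'a::comm_semiring_0 list set \<Rightarrow> bool" where
  "LCD_code n D \<longleftrightarrow> D \<inter> dual_code n D = {replicate n 0}"

text \<open>A cyclic code is identified, via \<open>Poly\<close>, with an ideal of \<open>F[u]/(u\<^sup>n - 1)\<close>.\<close>

locale cyclic_code =
  fixes n :: nat and D :: "'a::field list set"
  assumes length_pos: "n \<ge> 1"
    and length_code: "v \<in> D \<Longrightarrow> length v = n"
    and zero_in_code: "replicate n 0 \<in> D"
    and add_in_code: "v \<in> D \<Longrightarrow> w \<in> D \<Longrightarrow> map2 (+) v w \<in> D"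
    and scale_in_code: "v \<in> D \<Longrightarrow> map ((*) c) v \<in> D"
    and cshift_in_code: "v \<in> D \<Longrightarrow> cshift v \<in> D"
begin

abbreviation code_ideal :: "'a poly set" where
  "code_ideal \<equiv> Poly ` D"

lemma code_ideal_Rset: "f \<in> code_ideal \<Longrightarrow> f \<in> Rset n"
  using Poly_in_Rset length_pos length_code by auto

lemma zero_in_code_ideal: "0 \<in> code_ideal"
  using zero_in_code by force

lemma add_in_code_ideal: "f \<in> code_ideal \<Longrightarrow> g \<in> code_ideal \<Longrightarrow> f + g \<in> code_ideal"
  using add_in_code length_code by (auto simp flip: Poly_map2_plus)

lemma smult_in_code_ideal: "f \<in> code_ideal \<Longrightarrow> smult c f \<in> code_ideal"
  using scale_in_code by (auto simp: smult_Poly)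

lemma diff_in_code_ideal: "f \<in> code_ideal \<Longrightarrow> g \<in> code_ideal \<Longrightarrow> f - g \<in> code_ideal"
  using add_in_code_ideal[of f "smult (- 1) g"] smult_in_code_ideal[of g "- 1"] by simp

lemma pCons_0_in_code_ideal: "f \<in> code_ideal \<Longrightarrow> pCons 0 f mod ue1 n \<in> code_ideal"
proof -
  assume "f \<in> code_ideal"
  then obtain v where v: "v \<in> D" "f = Poly v" by auto
  then have "length v = n"
    using length_code by auto
  then have "v \<noteq> []"
    using length_pos by auto
  then have "pCons 0 f mod ue1 n = Poly (cshift v)"
    using v Poly_cshift \<open>length v = n\<close> by metis
  then show ?thesis
    using cshift_in_code[OF v(1)] by simp
qed

lemma mult_in_code_ideal: "f \<in> code_ideal \<Longrightarrow> (g * f) mod ue1 n \<in> code_ideal"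
proof (induction g)
  case (pCons a g)
  have "pCons a g * f = smult a f + pCons 0 (g * f)"
    by simp
  then have "(pCons a g * f) mod ue1 n = smult a f + pCons 0 ((g * f) mod ue1 n) mod ue1 n"
    using code_ideal_Rset[OF pCons.prems]
    by (metis poly_mod_add_left mod_smult_left Rset_mod_eq pCons_0_mod)
  then show ?case
    using pCons by (simp add: add_in_code_ideal smult_in_code_ideal pCons_0_in_code_ideal)
qed (simp add: zero_in_code_ideal)

lemma code_ideal_cong:
  "f \<in> code_ideal \<Longrightarrow> g \<in> Rset n \<Longrightarrow> [g = f] (mod ue1 n) \<Longrightarrow> g \<in> code_ideal"
  using Rset_cong_eq code_ideal_Rset by metis

lemma dual_code_iff_rev:
  assumes w: "length w = n"
  shows "w \<in> dual_code n D \<longleftrightarrow> (\<forall>f\<in>code_ideal. (f * Poly (rev w)) mod ue1 n = 0)"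
proof
  assume dual: "w \<in> dual_code n D"
  show "\<forall>f\<in>code_ideal. (f * Poly (rev w)) mod ue1 n = 0"
  proof (intro ballI poly_eqI)
    fix f k assume f: "f \<in> code_ideal"
    show "coeff ((f * Poly (rev w)) mod ue1 n) k = coeff 0 k"
    proof (cases "k < n")
      case True
      \<comment> \<open>the coefficient of \<open>u\<^sup>k\<close> is the inner product of \<open>u\<^sup>n\<^sup>-\<^sup>1\<^sup>-\<^sup>k f\<close> with \<open>w\<close>\<close>
      define d where "d = n - 1 - k"
      obtain v where v: "v \<in> D" "(monom 1 d * f) mod ue1 n = Poly v"
        using mult_in_code_ideal[OF f] by blast
      have "coeff ((f * Poly (rev w)) mod ue1 n) k
          = coeff ((monom 1 d * (f * Poly (rev w))) mod ue1 n) (n - 1)"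
        using coeff_mod_ue1_monom_mult[of k d n "f * Poly (rev w)"] True unfolding d_def by simp
      also have "\<dots> = coeff ((Poly v * Poly (rev w)) mod ue1 n) (n - 1)"
        by (simp add: mod_mult_left_eq mult.assoc flip: v(2))
      also have "\<dots> = inner_list v w"
        using inner_list_eq_coeff_mod_ue1[OF length_pos length_code[OF v(1)] w] by simp
      also have "\<dots> = 0"
        using dual v(1) unfolding dual_code_def by auto
      finally show ?thesis by simp
    next
      case False
      then show ?thesis
        using Rset_iff_coeff[OF length_pos, of "(f * Poly (rev w)) mod ue1 n"] by simp
    qed
  qed
next
  assume orth: "\<forall>f\<in>code_ideal. (f * Poly (rev w)) mod ue1 n = 0"
  have "inner_list v w = 0" if "v \<in> D" for v
    using inner_list_eq_coeff_mod_ue1[OF length_pos length_code[OF that] w] orth that by simp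
  then show "w \<in> dual_code n D"
    using w unfolding dual_code_def by auto
qed

lemma dual_code_iff:
  assumes w: "length w = n"
  shows "w \<in> dual_code n D \<longleftrightarrow> (\<forall>f\<in>code_ideal. [f * recip n (Poly w) = 0] (mod ue1 n))"
proof -
  have "[f * Poly (rev w) = monom 1 (n - 1) * (f * recip n (Poly w))] (mod ue1 n)" for f
    using cong_scalar_left[OF cong_Poly_rev[OF w], of f] by (simp add: ac_simps)
  then have "[f * Poly (rev w) = 0] (mod ue1 n) \<longleftrightarrow> [f * recip n (Poly w) = 0] (mod ue1 n)" for f
    using cong_mult_monom_ue1_0_iff[OF length_pos] by (metis cong_def)
  then show ?thesis
    unfolding dual_code_iff_rev[OF w] by (simp add: cong_def)
qed

lemma reversible_iff: "reversible D \<longleftrightarrow> (\<forall>g\<in>code_ideal. recip n g mod ue1 n \<in> code_ideal)"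
proof
  assume rev: "reversible D"
  show "\<forall>g\<in>code_ideal. recip n g mod ue1 n \<in> code_ideal"
  proof
    fix g assume "g \<in> code_ideal"
    then obtain w where w: "w \<in> D" "g = Poly w" by auto
    then have "Poly (rev w) \<in> code_ideal"
      using rev unfolding reversible_def by auto
    then have "(monom 1 1 * Poly (rev w)) mod ue1 n \<in> code_ideal"
      by (rule mult_in_code_ideal)
    moreover have "[recip n g = monom 1 1 * Poly (rev w)] (mod ue1 n)"
      using cong_recip_Poly[OF length_pos length_code[OF w(1)]] w(2) by simp
    ultimately show "recip n g mod ue1 n \<in> code_ideal"
      by (simp add: cong_def)
  qed
next
  assume recip_closed: "\<forall>g\<in>code_ideal. recip n g mod ue1 n \<in> code_ideal"
  show "reversible D"
    unfolding reversible_def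
  proof
    fix w assume w: "w \<in> D"
    then have "(monom 1 (n - 1) * (recip n (Poly w) mod ue1 n)) mod ue1 n \<in> code_ideal"
      using recip_closed mult_in_code_ideal by blast
    moreover have "[Poly (rev w) = monom 1 (n - 1) * (recip n (Poly w) mod ue1 n)] (mod ue1 n)"
      using cong_Poly_rev[OF length_code[OF w]] by (simp add: cong_def mod_mult_right_eq)
    moreover have "Poly (rev w) \<in> Rset n"
      using Poly_in_Rset[OF length_pos, of "rev w"] length_code[OF w] by simp
    ultimately have "Poly (rev w) \<in> code_ideal"
      using code_ideal_cong cong_mod_right by metis
    then obtain v where "v \<in> D" "Poly (rev w) = Poly v" by auto
    then show "rev w \<in> D"
      using Poly_eq_imp_eq[of "rev w" v] length_code w by auto
  qed
qed

lemma min_degree_dvd: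
  assumes g: "g \<in> code_ideal" "g \<noteq> 0"
    and g_min: "\<And>y. y \<in> code_ideal \<Longrightarrow> y \<noteq> 0 \<Longrightarrow> degree g \<le> degree y"
    and f: "f mod ue1 n \<in> code_ideal"
  shows "g dvd f"
proof -
  have "degree g < n"
    using code_ideal_Rset[OF g(1)] g(2) Rset_iff_degree[OF length_pos, of g] by simp
  then have "f mod g \<in> Rset n"
    using degree_mod_less[OF g(2), of f] Rset_iff_degree[OF length_pos, of "f mod g"] by auto
  moreover have "[f mod g = f mod ue1 n - (f div g * g) mod ue1 n] (mod ue1 n)"
    by (simp add: cong_def poly_mod_diff_left minus_mod_eq_div_mult [symmetric])
  moreover have "f mod ue1 n - (f div g * g) mod ue1 n \<in> code_ideal"
    using f mult_in_code_ideal[OF g(1)] by (rule diff_in_code_ideal)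
  ultimately have "f mod g \<in> code_ideal"
    by (rule code_ideal_cong[rotated])
  then have "f mod g = 0"
    using g_min[of "f mod g"] degree_mod_less'[OF g(2), of f] by linarith
  then show ?thesis by (simp add: mod_eq_0_iff_dvd)
qed

text \<open>Since \<open>n \<noteq> 0\<close> in \<open>F\<close>, \<open>u\<^sup>n - 1\<close> is squarefree, so a generator \<open>g\<close> of least degree
  is coprime to \<open>(u\<^sup>n - 1) / g\<close>, and the Bezout multiple \<open>a g\<close> of \<open>g\<close> is a unit of the ideal.\<close>

lemma idempotent_generator:
  assumes "of_nat n \<noteq> (0 :: 'a)"
  shows "\<exists>\<epsilon>\<in>code_ideal. \<forall>f\<in>code_ideal. [\<epsilon> * f = f] (mod ue1 n)"
proof (cases "code_ideal = {0}")
  case True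
  then show ?thesis by auto
next
  case False
  then obtain x where "x \<in> code_ideal" "x \<noteq> 0"
    using zero_in_code_ideal by blast
  then obtain g where g: "g \<in> code_ideal" "g \<noteq> 0"
    and g_min: "\<And>y. y \<in> code_ideal \<Longrightarrow> y \<noteq> 0 \<Longrightarrow> degree g \<le> degree y"
    using ex_has_least_nat[of "\<lambda>y. y \<in> code_ideal \<and> y \<noteq> 0" x degree] by blast
  have g_dvd: "g dvd f" if "f \<in> code_ideal" for f
    using min_degree_dvd[OF g g_min] Rset_mod_eq[OF code_ideal_Rset[OF that]] that by simp
  have "g dvd ue1 n"
    using min_degree_dvd[OF g g_min] zero_in_code_ideal by simp
  then obtain h where gh: "ue1 n = g * h" ..
  then obtain a b where ab: "a * g + b * h = 1"
    using poly_bezout[OF coprime_if_mult_eq_ue1[OF assms gh[symmetric]]] by blast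
  have "(a * g) mod ue1 n \<in> code_ideal"
    using g(1) by (rule mult_in_code_ideal)
  moreover have "[(a * g) mod ue1 n * f = f] (mod ue1 n)" if f_in: "f \<in> code_ideal" for f
  proof -
    obtain k where f: "f = g * k"
      using g_dvd[OF f_in] by (rule dvdE)
    have "[(a * g) mod ue1 n * f = a * g * f] (mod ue1 n)"
      by (simp add: cong_def mod_mult_left_eq)
    also have "a * g * f = (a * g + b * h) * f - ue1 n * (b * k)"
      unfolding f gh by (simp add: algebra_simps)
    also have "\<dots> = f - ue1 n * (b * k)"
      unfolding ab by simp
    also have "[\<dots> = f - 0] (mod ue1 n)"
      by (intro cong_diff cong_refl) (simp add: cong_0_iff)
    finally show ?thesis by simp
  qed
  ultimately show ?thesis by blast
qed

context
  fixes \<epsilon> :: "'a poly"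
  assumes \<epsilon>: "\<epsilon> \<in> code_ideal"
    and idem: "\<And>f. f \<in> code_ideal \<Longrightarrow> [\<epsilon> * f = f] (mod ue1 n)"
begin

text \<open>The code word \<open>\<epsilon> - \<epsilon>(u\<^sup>-\<^sup>1) \<epsilon>\<close> is orthogonal to the whole code, hence zero;
  applying \<open>recip\<close> to \<open>\<epsilon> = \<epsilon>(u\<^sup>-\<^sup>1) \<epsilon>\<close> gives \<open>\<epsilon>(u\<^sup>-\<^sup>1) = \<epsilon> \<epsilon>(u\<^sup>-\<^sup>1) = \<epsilon>\<close>.\<close>

lemma recip_cong_idempotent:
  assumes LCD: "LCD_code n D"
  shows "[recip n \<epsilon> = \<epsilon>] (mod ue1 n)"
proof -
  let ?\<epsilon>' = "recip n \<epsilon>"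
  have recip_prod: "[recip n (?\<epsilon>' * \<epsilon>) = \<epsilon> * ?\<epsilon>'] (mod ue1 n)"
    unfolding recip_mult using cong_recip_recip[OF length_pos] by (rule cong_scalar_right)
  define c where "c = \<epsilon> - (?\<epsilon>' * \<epsilon>) mod ue1 n"
  have "c \<in> code_ideal"
    unfolding c_def using \<epsilon> mult_in_code_ideal[OF \<epsilon>] by (rule diff_in_code_ideal)
  then obtain v where v: "v \<in> D" "c = Poly v" by auto
  have "[f * recip n c = 0] (mod ue1 n)" if f: "f \<in> code_ideal" for f
  proof -
    have "[recip n ((?\<epsilon>' * \<epsilon>) mod ue1 n) = recip n (?\<epsilon>' * \<epsilon>)] (mod ue1 n)"
      by (rule cong_recip) (simp add: cong_def)
    then have "[recip n c = ?\<epsilon>' - \<epsilon> * ?\<epsilon>'] (mod ue1 n)"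
      unfolding c_def recip_diff using recip_prod by (intro cong_diff cong_refl) (rule cong_trans)
    then have "[f * recip n c = f * (?\<epsilon>' - \<epsilon> * ?\<epsilon>')] (mod ue1 n)"
      by (rule cong_scalar_left)
    also have "f * (?\<epsilon>' - \<epsilon> * ?\<epsilon>') = ?\<epsilon>' * (f - \<epsilon> * f)"
      by (simp add: algebra_simps)
    also have "[\<dots> = ?\<epsilon>' * (f - f)] (mod ue1 n)"
      using idem[OF f] by (intro cong_scalar_left cong_diff cong_refl)
    finally show ?thesis by simp
  qed
  then have "v \<in> D \<inter> dual_code n D"
    using dual_code_iff[OF length_code[OF v(1)]] v by auto
  then have "c = 0"
    using LCD v unfolding LCD_code_def by simp
  then have \<epsilon>_eq: "[\<epsilon> = ?\<epsilon>' * \<epsilon>] (mod ue1 n)"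
    using Rset_mod_eq[OF code_ideal_Rset[OF \<epsilon>]] unfolding c_def by (simp add: cong_def)
  have "[?\<epsilon>' = recip n (?\<epsilon>' * \<epsilon>)] (mod ue1 n)"
    using \<epsilon>_eq by (rule cong_recip)
  also have "[recip n (?\<epsilon>' * \<epsilon>) = \<epsilon> * ?\<epsilon>'] (mod ue1 n)"
    by (rule recip_prod)
  also have "[\<epsilon> * ?\<epsilon>' = \<epsilon>] (mod ue1 n)"
    using \<epsilon>_eq by (simp add: cong_sym mult.commute)
  finally show ?thesis .
qed

lemma reversible_if_LCD:
  assumes "LCD_code n D"
  shows "reversible D"
  unfolding reversible_iff
proof
  fix g assume g: "g \<in> code_ideal"
  have "[recip n g = recip n (\<epsilon> * g)] (mod ue1 n)"
    using idem[OF g] by (intro cong_recip) (rule cong_sym)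
  also have "recip n (\<epsilon> * g) = recip n \<epsilon> * recip n g"
    by (rule recip_mult)
  also have "[\<dots> = \<epsilon> * recip n g] (mod ue1 n)"
    using recip_cong_idempotent[OF assms] by (rule cong_scalar_right)
  finally have "recip n g mod ue1 n = (recip n g * \<epsilon>) mod ue1 n"
    by (simp add: cong_def mult.commute)
  then show "recip n g mod ue1 n \<in> code_ideal"
    using mult_in_code_ideal[OF \<epsilon>] by simp
qed

lemma LCD_if_reversible:
  assumes rev: "reversible D"
  shows "LCD_code n D"
proof -
  have "w = replicate n 0" if w: "w \<in> D" "w \<in> dual_code n D" for w
  proof -
    let ?g = "Poly w"
    have "recip n ?g mod ue1 n \<in> code_ideal"
      using rev w(1) unfolding reversible_iff by blast
    then have "[recip n ?g mod ue1 n = \<epsilon> * (recip n ?g mod ue1 n)] (mod ue1 n)"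
      using idem cong_sym by blast
    also have "[\<epsilon> * (recip n ?g mod ue1 n) = \<epsilon> * recip n ?g] (mod ue1 n)"
      by (simp add: cong_def mod_mult_right_eq)
    also have "[\<epsilon> * recip n ?g = 0] (mod ue1 n)"
      using w \<epsilon> dual_code_iff[OF length_code[OF w(1)]] by blast
    finally have "[recip n ?g = 0] (mod ue1 n)"
      by (simp add: cong_def)
    then have "[recip n (recip n ?g) = recip n 0] (mod ue1 n)"
      by (rule cong_recip)
    then have "[?g = 0] (mod ue1 n)"
      using cong_recip_recip[OF length_pos, of ?g] by (metis cong_sym cong_trans recip_0)
    then have "?g = 0"
      using code_ideal_Rset[of ?g] w(1) by (simp add: Rset_def cong_def)
    then show ?thesis
      using Poly_eq_imp_eq[of w "replicate n 0"] length_code[OF w(1)] by simp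
  qed
  moreover have "replicate n 0 \<in> dual_code n D"
    using length_code by (rule replicate_0_in_dual_code)
  ultimately show ?thesis
    unfolding LCD_code_def using zero_in_code by blast
qed

end

theorem LCD_iff_reversible:
  assumes "of_nat n \<noteq> (0 :: 'a)"
  shows "LCD_code n D \<longleftrightarrow> reversible D"
  using idempotent_generator[OF assms] reversible_if_LCD LCD_if_reversible by metis

end

section \<open>The decomposition of \<open>R\<^sub>e\<^sub>,\<^sub>q\<close>\<close>

definition component :: "(nat \<Rightarrow> 'a::comm_semiring_0) \<Rightarrow> nat \<Rightarrow> 'a poly list \<Rightarrow> 'a list" where
  "component \<alpha> i c = map (\<lambda>f. poly f (\<alpha> i)) c"

lemma length_component [simp]: "length (component \<alpha> i c) = length c"
  by (simp add: component_def)

lemma component_map2_plus: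
  "length x = length y \<Longrightarrow> component \<alpha> i (map2 (+) x y) = map2 (+) (component \<alpha> i x) (component \<alpha> i y)"
  by (rule nth_equalityI) (simp_all add: component_def)

lemma component_cshift: "component \<alpha> i (cshift x) = cshift (component \<alpha> i x)"
  by (simp add: component_def cshift_def last_map map_butlast)

lemma inj_on_roots_ue1:
  assumes e: "of_nat e \<noteq> (0 :: 'a::field)"
    and prod: "(\<Prod>i\<in>{1..e}. Gpol \<alpha> i) = (ue1 e :: 'a poly)"
  shows "inj_on \<alpha> {1..e}"
proof (rule inj_onI, rule ccontr)
  fix i j assume i: "i \<in> {1..e}" and j: "j \<in> {1..e}" and eq: "\<alpha> i = \<alpha> j" and "i \<noteq> j"
  define G where "G = Gpol \<alpha> i"
  define P where "P = (\<Prod>l\<in>{1..e} - {i} - {j}. Gpol \<alpha> l)"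
  have "ue1 e = Gpol \<alpha> i * (Gpol \<alpha> j * P)"
    unfolding prod[symmetric] P_def using i j \<open>i \<noteq> j\<close> by (simp add: prod.remove)
  also have "Gpol \<alpha> j = G"
    using eq by (simp add: G_def Gpol_def)
  finally have U: "ue1 e = G * (G * P)"
    by (simp add: G_def)
  have "G dvd ue1 e" "G dvd pderiv (ue1 e)"
    unfolding U pderiv_mult by simp_all
  then have "is_unit G"
    by (rule is_unit_if_dvd_ue1_pderiv[OF e])
  then show False
    by (simp add: G_def Gpol_def is_unit_iff_degree)
qed

text \<open>Evaluation at the roots \<open>\<alpha> i\<close> is the Chinese remainder isomorphism
  \<open>R\<^sub>e\<^sub>,\<^sub>q \<cong> F\<^sup>e\<close>, under which \<open>\<mu> i\<close> is the \<open>i\<close>-th unit vector; hence the component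
  code \<open>C\<^sub>i\<close> is the image of \<open>C\<close> under evaluation at \<open>\<alpha> i\<close>.\<close>

locale ue1_split =
  fixes e :: nat and \<alpha> :: "nat \<Rightarrow> 'a::field"
  assumes prod_Gpol: "(\<Prod>i\<in>{1..e}. Gpol \<alpha> i) = ue1 e"
    and inj_roots: "inj_on \<alpha> {1..e}"
begin

lemma e_pos: "e \<ge> 1"
  using prod_Gpol by (cases e) (auto simp: ue1_def)

lemma poly_ue1_root: "i \<in> {1..e} \<Longrightarrow> poly (ue1 e) (\<alpha> i) = 0"
  unfolding prod_Gpol[symmetric] poly_prod by (rule prod_zero) (auto simp: Gpol_def)

lemma poly_mod_ue1_root: "i \<in> {1..e} \<Longrightarrow> poly (f mod ue1 e) (\<alpha> i) = poly f (\<alpha> i)"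
  by (rule poly_mod) (rule poly_ue1_root)

lemma Rset_eq_if_poly_roots_eq:
  assumes "f \<in> Rset e" "g \<in> Rset e" and roots: "\<And>i. i \<in> {1..e} \<Longrightarrow> poly f (\<alpha> i) = poly g (\<alpha> i)"
  shows "f = g"
proof (rule ccontr)
  assume "f \<noteq> g"
  then have d0: "f - g \<noteq> 0" by simp
  have "f - g \<in> Rset e"
    using assms(1,2) by (rule Rset_diff)
  then have "degree (f - g) < e"
    using d0 Rset_iff_degree[OF e_pos, of "f - g"] by simp
  moreover have "\<alpha> ` {1..e} \<subseteq> {x. poly (f - g) x = 0}"
    using roots by auto
  then have "card (\<alpha> ` {1..e}) \<le> card {x. poly (f - g) x = 0}"
    by (rule card_mono[OF poly_roots_finite[OF d0]])
  then have "e \<le> card {x. poly (f - g) x = 0}"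
    using card_image[OF inj_roots] by simp
  ultimately show False
    using card_poly_roots_bound[OF d0] by linarith
qed

lemma poly_Ghat_root_eq_0_iff:
  assumes "i \<in> {1..e}" "j \<in> {1..e}"
  shows "poly (Ghat e \<alpha> i) (\<alpha> j) = 0 \<longleftrightarrow> i \<noteq> j"
proof -
  have "ue1 e = Gpol \<alpha> i * (\<Prod>l\<in>{1..e} - {i}. Gpol \<alpha> l)"
    unfolding prod_Gpol[symmetric] using assms(1) by (simp add: prod.remove)
  moreover have "Gpol \<alpha> i \<noteq> 0"
    by (simp add: Gpol_def)
  ultimately have "Ghat e \<alpha> i = (\<Prod>l\<in>{1..e} - {i}. Gpol \<alpha> l)"
    unfolding Ghat_def by simp
  then have "poly (Ghat e \<alpha> i) (\<alpha> j) = (\<Prod>l\<in>{1..e} - {i}. \<alpha> j - \<alpha> l)"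
    by (simp add: poly_prod Gpol_def)
  also have "\<dots> = 0 \<longleftrightarrow> (\<exists>l\<in>{1..e} - {i}. \<alpha> j = \<alpha> l)"
    by simp
  also have "\<dots> \<longleftrightarrow> i \<noteq> j"
  proof
    assume "\<exists>l\<in>{1..e} - {i}. \<alpha> j = \<alpha> l"
    then obtain l where "l \<in> {1..e}" "l \<noteq> i" "\<alpha> j = \<alpha> l" by blast
    then show "i \<noteq> j"
      using inj_onD[OF inj_roots] assms(2) by metis
  qed (use assms(2) in blast)
  finally show ?thesis .
qed

lemma poly_mu_root:
  assumes i: "i \<in> {1..e}" and j: "j \<in> {1..e}"
  shows "poly (mu e \<alpha> i) (\<alpha> j) = (if i = j then 1 else 0)"
proof -
  have "\<exists>h z. z * Gpol \<alpha> i + h * Ghat e \<alpha> i = 1"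
  proof -
    define c where "c = poly (Ghat e \<alpha> i) (\<alpha> i)"
    have "c \<noteq> 0"
      using poly_Ghat_root_eq_0_iff[OF i i] by (simp add: c_def)
    then have "Gpol \<alpha> i dvd 1 - [:inverse c:] * Ghat e \<alpha> i"
      by (simp add: Gpol_def poly_eq_0_iff_dvd[symmetric] c_def[symmetric])
    then obtain z where "1 - [:inverse c:] * Ghat e \<alpha> i = Gpol \<alpha> i * z" ..
    then have "z * Gpol \<alpha> i + [:inverse c:] * Ghat e \<alpha> i = 1"
      by (simp add: diff_eq_eq mult.commute)
    then show ?thesis by blast
  qed
  then have "\<exists>z. z * Gpol \<alpha> i + hpol e \<alpha> i * Ghat e \<alpha> i = 1"
    unfolding hpol_def by (rule someI_ex)
  then obtain z where z: "z * Gpol \<alpha> i + hpol e \<alpha> i * Ghat e \<alpha> i = 1" ..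
  have "poly (mu e \<alpha> i) (\<alpha> j) = poly (hpol e \<alpha> i) (\<alpha> j) * poly (Ghat e \<alpha> i) (\<alpha> j)"
    unfolding mu_def poly_mod_ue1_root[OF j] by simp
  also have "\<dots> = (if i = j then 1 else 0)"
  proof (cases "i = j")
    case True
    have "poly (z * Gpol \<alpha> i + hpol e \<alpha> i * Ghat e \<alpha> i) (\<alpha> i) = 1"
      using z by simp
    then show ?thesis using True by (simp add: Gpol_def)
  qed (simp add: poly_Ghat_root_eq_0_iff[OF i j])
  finally show ?thesis .
qed

lemma mu_in_Rset: "mu e \<alpha> i \<in> Rset e"
  by (simp add: mu_def)

lemma poly_sum_smult_mu_root:
  assumes "i \<in> {1..e}"
  shows "poly (\<Sum>j\<in>{1..e}. smult (a j) (mu e \<alpha> j)) (\<alpha> i) = a i"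
proof -
  have "poly (\<Sum>j\<in>{1..e}. smult (a j) (mu e \<alpha> j)) (\<alpha> i) = (\<Sum>j\<in>{1..e}. a j * poly (mu e \<alpha> j) (\<alpha> i))"
    by (simp add: poly_sum)
  also have "\<dots> = (\<Sum>j\<in>{1..e}. if j = i then a j else 0)"
    using assms by (intro sum.cong) (auto simp: poly_mu_root)
  also have "\<dots> = a i"
    using assms by simp
  finally show ?thesis .
qed

lemma component_comb:
  assumes i: "i \<in> {1..e}" and "length (s i) = n"
  shows "component \<alpha> i (comb e \<alpha> n s) = s i"
proof (rule nth_equalityI)
  fix k assume "k < length (component \<alpha> i (comb e \<alpha> n s))"
  then show "component \<alpha> i (comb e \<alpha> n s) ! k = s i ! k"
    using poly_sum_smult_mu_root[OF i, of "\<lambda>j. s j ! k"] by (simp add: component_def comb_def)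
qed (simp add: comb_def assms)

lemma comb_component:
  assumes c: "c \<in> Rvecs e n"
  shows "comb e \<alpha> n (\<lambda>j. component \<alpha> j c) = c"
proof (rule nth_equalityI)
  fix k assume "k < length (comb e \<alpha> n (\<lambda>j. component \<alpha> j c))"
  then have k: "k < length c" and "c ! k \<in> Rset e"
    using c by (auto simp: Rvecs_def comb_def)
  have "(\<Sum>j\<in>{1..e}. smult (component \<alpha> j c ! k) (mu e \<alpha> j)) = c ! k"
  proof (rule Rset_eq_if_poly_roots_eq)
    show "(\<Sum>j\<in>{1..e}. smult (component \<alpha> j c ! k) (mu e \<alpha> j)) \<in> Rset e"
      by (intro Rset_sum Rset_smult mu_in_Rset)
    show "c ! k \<in> Rset e" by fact
    fix i assume i: "i \<in> {1..e}"
    show "poly (\<Sum>j\<in>{1..e}. smult (component \<alpha> j c ! k) (mu e \<alpha> j)) (\<alpha> i) = poly (c ! k) (\<alpha> i)"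
      using poly_sum_smult_mu_root[OF i, of "\<lambda>j. component \<alpha> j c ! k"] k
      by (simp add: component_def)
  qed
  then show "comb e \<alpha> n (\<lambda>j. component \<alpha> j c) ! k = c ! k"
    using c k by (simp add: comb_def Rvecs_def)
qed (use c in \<open>simp add: comb_def Rvecs_def\<close>)

lemma R_inner_eq_0_iff:
  assumes "length y = length x"
  shows "R_inner e x y = 0 \<longleftrightarrow> (\<forall>i\<in>{1..e}. inner_list (component \<alpha> i x) (component \<alpha> i y) = 0)"
proof -
  have poly_R_inner: "poly (R_inner e x y) (\<alpha> i) = inner_list (component \<alpha> i x) (component \<alpha> i y)"
    if "i \<in> {1..e}" for i
    using that assms
    by (simp add: R_inner_def inner_list_def component_def poly_mod_ue1_root poly_sum)
  have R: "R_inner e x y \<in> Rset e"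
    by (simp add: R_inner_def)
  show ?thesis
  proof
    assume "R_inner e x y = 0"
    then show "\<forall>i\<in>{1..e}. inner_list (component \<alpha> i x) (component \<alpha> i y) = 0"
      using poly_R_inner by (metis poly_0)
  next
    assume "\<forall>i\<in>{1..e}. inner_list (component \<alpha> i x) (component \<alpha> i y) = 0"
    then show "R_inner e x y = 0"
      using poly_R_inner by (intro Rset_eq_if_poly_roots_eq[OF R Rset_zero]) simp
  qed
qed

lemma rmult_mu:
  assumes i: "i \<in> {1..e}"
  shows "rmult e (mu e \<alpha> i) f = smult (poly f (\<alpha> i)) (mu e \<alpha> i)"
proof (rule Rset_eq_if_poly_roots_eq)
  show "rmult e (mu e \<alpha> i) f \<in> Rset e" "smult (poly f (\<alpha> i)) (mu e \<alpha> i) \<in> Rset e"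
    by (simp_all add: rmult_def Rset_smult mu_in_Rset)
  fix j assume j: "j \<in> {1..e}"
  then show "poly (rmult e (mu e \<alpha> i) f) (\<alpha> j) = poly (smult (poly f (\<alpha> i)) (mu e \<alpha> i)) (\<alpha> j)"
    using i by (simp add: rmult_def poly_mod_ue1_root poly_mu_root)
qed

lemma component_rmult_const:
  "i \<in> {1..e} \<Longrightarrow> component \<alpha> i (map (rmult e [:a:]) x) = map ((*) a) (component \<alpha> i x)"
  by (simp add: component_def rmult_def poly_mod_ue1_root)

lemma component_eq_0_imp_eq_0:
  assumes c: "c \<in> Rvecs e n" and zero: "\<And>j. j \<in> {1..e} \<Longrightarrow> component \<alpha> j c = replicate n 0"
  shows "c = replicate n 0"
proof (rule nth_equalityI)
  show "length c = length (replicate n 0)"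
    using c by (simp add: Rvecs_def)
  fix k assume k: "k < length c"
  have "c ! k = 0"
  proof (rule Rset_eq_if_poly_roots_eq)
    show "c ! k \<in> Rset e"
      using c k by (auto simp: Rvecs_def)
    fix j assume "j \<in> {1..e}"
    then have "component \<alpha> j c ! k = 0"
      using zero k c by (simp add: Rvecs_def)
    then show "poly (c ! k) (\<alpha> j) = poly 0 (\<alpha> j)"
      using k by (simp add: component_def)
  qed simp
  then show "c ! k = replicate n 0 ! k"
    using k c by (simp add: Rvecs_def)
qed

lemma component_smult_mu:
  assumes "i \<in> {1..e}" "j \<in> {1..e}"
  shows "component \<alpha> j (map (\<lambda>a. smult a (mu e \<alpha> i)) v) = (if j = i then v else replicate (length v) 0)"
  using assms by (simp add: component_def poly_mu_root o_def map_replicate_const)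

context
  fixes n :: nat and C :: "'a poly list set"
  assumes linear: "R_linear_code e n C"
begin

lemma code_in_Rvecs: "c \<in> C \<Longrightarrow> c \<in> Rvecs e n"
  using linear by (auto simp: R_linear_code_def)

lemma comp_code_eq_image:
  assumes i: "i \<in> {1..e}"
  shows "comp_code e \<alpha> n C i = component \<alpha> i ` C"
proof
  show "comp_code e \<alpha> n C i \<subseteq> component \<alpha> i ` C"
  proof
    fix v assume "v \<in> comp_code e \<alpha> n C i"
    then obtain s where s: "s i = v" "length (s i) = n" "comb e \<alpha> n s \<in> C"
      unfolding comp_code_def using i by blast
    then have "component \<alpha> i (comb e \<alpha> n s) = v"
      using component_comb[where s = s, OF i s(2)] by simp
    then show "v \<in> component \<alpha> i ` C"
      using s(3) by blast
  qed
  show "component \<alpha> i ` C \<subseteq> comp_code e \<alpha> n C i"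
  proof
    fix v assume "v \<in> component \<alpha> i ` C"
    then obtain c where c: "c \<in> C" "v = component \<alpha> i c" by blast
    then have "length c = n" "comb e \<alpha> n (\<lambda>j. component \<alpha> j c) = c"
      using code_in_Rvecs[OF c(1)] comb_component[OF code_in_Rvecs[OF c(1)]] by (simp_all add: Rvecs_def)
    then show "v \<in> comp_code e \<alpha> n C i"
      unfolding comp_code_def using c by auto
  qed
qed

lemma zero_in_comp_code: "i \<in> {1..e} \<Longrightarrow> replicate n 0 \<in> comp_code e \<alpha> n C i"
  using linear unfolding comp_code_eq_image R_linear_code_def
  by (metis (no_types) image_eqI component_def map_replicate poly_0)

lemma smult_mu_in_code:
  assumes i: "i \<in> {1..e}" and v: "v \<in> comp_code e \<alpha> n C i"
  shows "map (\<lambda>a. smult a (mu e \<alpha> i)) v \<in> C"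
proof -
  obtain c where c: "c \<in> C" "v = component \<alpha> i c"
    using v comp_code_eq_image[OF i] by auto
  have "map (rmult e (mu e \<alpha> i)) c \<in> C"
    using linear c(1) mu_in_Rset unfolding R_linear_code_def by blast
  moreover have "map (rmult e (mu e \<alpha> i)) c = map (\<lambda>f. smult (poly f (\<alpha> i)) (mu e \<alpha> i)) c"
    by (intro map_cong refl rmult_mu[OF i])
  ultimately show ?thesis
    by (simp add: c(2) component_def o_def)
qed

lemma cyclic_code_comp_code:
  assumes n: "n \<ge> 1" and cyclic: "is_cyclic C" and i: "i \<in> {1..e}"
  shows "cyclic_code n (comp_code e \<alpha> n C i)"
  unfolding comp_code_eq_image[OF i]
proof
  have len: "length c = n" if "c \<in> C" for c
    using code_in_Rvecs[OF that] by (simp add: Rvecs_def)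
  show "n \<ge> 1" by (fact n)
  show "length v = n" if "v \<in> component \<alpha> i ` C" for v
    using that len by auto
  show "replicate n 0 \<in> component \<alpha> i ` C"
    using zero_in_comp_code[OF i] comp_code_eq_image[OF i] by simp
  show "map2 (+) v w \<in> component \<alpha> i ` C"
    if vw: "v \<in> component \<alpha> i ` C" "w \<in> component \<alpha> i ` C" for v w
  proof -
    obtain x where x: "x \<in> C" "v = component \<alpha> i x"
      using vw(1) by (rule imageE)
    obtain y where y: "y \<in> C" "w = component \<alpha> i y"
      using vw(2) by (rule imageE)
    show ?thesis
      using x y linear component_map2_plus[of x y] len unfolding R_linear_code_def
      by (metis image_eqI)
  qed
  show "map ((*) a) v \<in> component \<alpha> i ` C" if v: "v \<in> component \<alpha> i ` C" for a v
  proof -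
    obtain x where x: "x \<in> C" "v = component \<alpha> i x"
      using v by (rule imageE)
    show ?thesis
      using x linear Rset_const[OF e_pos] component_rmult_const[OF i]
      unfolding R_linear_code_def by (metis image_eqI)
  qed
  show "cshift v \<in> component \<alpha> i ` C" if v: "v \<in> component \<alpha> i ` C" for v
  proof -
    obtain x where x: "x \<in> C" "v = component \<alpha> i x"
      using v by (rule imageE)
    show ?thesis
      using x cyclic component_cshift unfolding is_cyclic_def by (metis image_eqI)
  qed
qed

lemma length_comp_code: "v \<in> comp_code e \<alpha> n C i \<Longrightarrow> length v = n"
  by (simp add: comp_code_def)

lemma R_dual_iff:
  "y \<in> R_dual e n C \<longleftrightarrow>
    y \<in> Rvecs e n \<and> (\<forall>i\<in>{1..e}. component \<alpha> i y \<in> dual_code n (comp_code e \<alpha> n C i))"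
proof (cases "y \<in> Rvecs e n")
  case True
  then have "length y = n"
    by (simp add: Rvecs_def)
  have "R_inner e x y = 0 \<longleftrightarrow> (\<forall>i\<in>{1..e}. inner_list (component \<alpha> i x) (component \<alpha> i y) = 0)"
    if "x \<in> C" for x
    using R_inner_eq_0_iff[of y x] code_in_Rvecs[OF that] \<open>length y = n\<close> by (simp add: Rvecs_def)
  moreover have "component \<alpha> i y \<in> dual_code n (comp_code e \<alpha> n C i) \<longleftrightarrow>
      (\<forall>x\<in>C. inner_list (component \<alpha> i x) (component \<alpha> i y) = 0)" if "i \<in> {1..e}" for i
    using \<open>length y = n\<close> by (simp add: dual_code_def comp_code_eq_image[OF that])
  ultimately show ?thesis
    using True unfolding R_dual_def by blast
qed (simp add: R_dual_def)

lemma smult_mu_in_R_dual: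
  assumes i: "i \<in> {1..e}" and v: "v \<in> dual_code n (comp_code e \<alpha> n C i)"
  shows "map (\<lambda>a. smult a (mu e \<alpha> i)) v \<in> R_dual e n C"
proof -
  have len: "length v = n"
    using v by (simp add: dual_code_def)
  have "smult a (mu e \<alpha> i) \<in> Rset e" for a
    by (rule Rset_smult[OF mu_in_Rset])
  then have "map (\<lambda>a. smult a (mu e \<alpha> i)) v \<in> Rvecs e n"
    using len by (auto simp: Rvecs_def)
  moreover have "component \<alpha> j (map (\<lambda>a. smult a (mu e \<alpha> i)) v) \<in> dual_code n (comp_code e \<alpha> n C j)"
    if j: "j \<in> {1..e}" for j
    using v len component_smult_mu[OF i j, of v] replicate_0_in_dual_code[OF length_comp_code]
    by simp
  ultimately show ?thesis
    by (simp add: R_dual_iff)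
qed

lemma LCD_comp_code_if_R_LCD:
  assumes LCD: "R_LCD e n C" and i: "i \<in> {1..e}"
  shows "LCD_code n (comp_code e \<alpha> n C i)"
proof -
  have "v = replicate n 0"
    if v: "v \<in> comp_code e \<alpha> n C i" "v \<in> dual_code n (comp_code e \<alpha> n C i)" for v
  proof -
    have "map (\<lambda>a. smult a (mu e \<alpha> i)) v = replicate n 0"
      using LCD smult_mu_in_code[OF i v(1)] smult_mu_in_R_dual[OF i v(2)]
      unfolding R_LCD_def by blast
    then have "v = component \<alpha> i (replicate n 0)"
      using component_smult_mu[OF i i, of v] by simp
    then show ?thesis
      by (simp add: component_def)
  qed
  moreover have "replicate n 0 \<in> comp_code e \<alpha> n C i"
    using i by (rule zero_in_comp_code)
  moreover have "replicate n 0 \<in> dual_code n (comp_code e \<alpha> n C i)"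
    using length_comp_code by (rule replicate_0_in_dual_code)
  ultimately show ?thesis
    unfolding LCD_code_def by blast
qed

lemma R_LCD_if_LCD_comp_code:
  assumes LCD: "\<And>i. i \<in> {1..e} \<Longrightarrow> LCD_code n (comp_code e \<alpha> n C i)"
  shows "R_LCD e n C"
proof -
  have "y = replicate n 0" if y: "y \<in> C" "y \<in> R_dual e n C" for y
  proof (rule component_eq_0_imp_eq_0)
    show "y \<in> Rvecs e n"
      using y(1) by (rule code_in_Rvecs)
    fix j assume j: "j \<in> {1..e}"
    have "component \<alpha> j y \<in> comp_code e \<alpha> n C j"
      using comp_code_eq_image[OF j] y(1) by blast
    moreover have "component \<alpha> j y \<in> dual_code n (comp_code e \<alpha> n C j)"
      using y(2) j by (simp add: R_dual_iff)
    ultimately show "component \<alpha> j y = replicate n 0"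
      using LCD[OF j] unfolding LCD_code_def by blast
  qed
  moreover have zero: "replicate n 0 \<in> C"
    using linear by (simp add: R_linear_code_def)
  moreover have "replicate n 0 \<in> R_dual e n C"
    using code_in_Rvecs[OF zero]
    by (simp add: R_dual_iff component_def replicate_0_in_dual_code[OF length_comp_code])
  ultimately show ?thesis
    unfolding R_LCD_def by blast
qed

lemma R_LCD_iff_LCD_comp_code:
  "R_LCD e n C \<longleftrightarrow> (\<forall>i\<in>{1..e}. LCD_code n (comp_code e \<alpha> n C i))"
  using LCD_comp_code_if_R_LCD R_LCD_if_LCD_comp_code by blast

end

end

lemma of_nat_card_UNIV: "of_nat (card (UNIV :: 'a::{ring_1, finite} set)) = (0 :: 'a)"
proof -
  have "(\<Sum>x\<in>(UNIV :: 'a set). x) = (\<Sum>x\<in>UNIV. x + 1)"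
    by (rule sum.reindex_bij_witness[of _ "\<lambda>x. x + 1" "\<lambda>x. x - 1"]) auto
  also have "\<dots> = (\<Sum>x\<in>UNIV. x) + of_nat (card (UNIV :: 'a set))"
    by (simp add: sum.distrib)
  finally show ?thesis by (metis add_cancel_left_right)
qed

theorem theorem4p5:
  fixes p m e t n :: nat
    and \<alpha> :: "nat \<Rightarrow> 'a::{field,finite}"
    and C :: "'a poly list set"
  assumes "prime p" and "odd p"
    and "card (UNIV :: 'a set) = p ^ m"
    and "card (UNIV :: 'a set) = e * t + 1" and "e \<ge> 2" and "t \<ge> 1"
    and "(\<Prod>i\<in>{1..e}. Gpol \<alpha> i) = ue1 e"
    and "coprime n (card (UNIV :: 'a set))"
    and "R_linear_code e n C" and "is_cyclic C"
  shows "R_LCD e n C \<longleftrightarrow> (\<forall>i\<in>{1..e}. reversible (comp_code e \<alpha> n C i))"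
proof -
  \<comment> \<open>Only \<open>q = e t + 1\<close> and \<open>gcd(n, q) = 1\<close> are used: they make \<open>e\<close> and \<open>n\<close> nonzero in \<open>F\<^sub>q\<close>,
    so \<open>u\<^sup>e - 1\<close> has distinct roots and \<open>u\<^sup>n - 1\<close> is squarefree.\<close>
  note q = assms(4) and q_zero = of_nat_card_UNIV[where 'a = 'a]
  have "of_nat e \<noteq> (0 :: 'a)"
    using q_zero unfolding q by (metis add_0 mult_zero_left of_nat_1 of_nat_add of_nat_mult one_neq_zero)
  then interpret ue1_split e \<alpha>
    using inj_on_roots_ue1 assms(7) by unfold_locales
  have "n \<ge> 1"
    using assms(4-6,8) by (cases n) auto
  have "of_nat n \<noteq> (0 :: 'a)"
    using assms(8) q_zero coprime_common_divisor[of n "card (UNIV :: 'a set)" "CHAR('a)"]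
    by (auto simp: of_nat_eq_0_iff_char_dvd)
  have "R_LCD e n C \<longleftrightarrow> (\<forall>i\<in>{1..e}. LCD_code n (comp_code e \<alpha> n C i))"
    using assms(9) by (rule R_LCD_iff_LCD_comp_code)
  also have "\<dots> \<longleftrightarrow> (\<forall>i\<in>{1..e}. reversible (comp_code e \<alpha> n C i))"
    using cyclic_code.LCD_iff_reversible[OF cyclic_code_comp_code[OF assms(9) \<open>n \<ge> 1\<close> assms(10)]]
      \<open>of_nat n \<noteq> 0\<close> by blast
  finally show ?thesis .
qed

end
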